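(* Let $t\in\mathbb{N}$ and let $F(x)=\mathrm{sign}(w\cdot x-\theta)$ be an LTF over $\{-1,1\}^n$ with every $w_i$ an integer in $\{-t,\dots,t\}$. Then for every $s\in\mathbb{N}$, either $w$ has at most $s$ nonzero coordinates, or the normalized vector $u=w/\|w\|_2$ satisfies $\sum_{i=1}^n u_i^4\le t^2/(s+1)$; i.e. $F$ is either $s$-sparse or $(t/\sqrt{s+1})$-regular.
   Context: $\mathrm{sign}(z)=1$ if $z>0$ and $-1$ otherwise. An LTF is $s$-sparse if its weight vector has at most $s$ nonzero entries. A unit vector $u$ is $\tau$-regular if $\sum_i u_i^4\le\tau^2$; an LTF is $\tau$-regular if it can be written $\mathrm{sign}(u\cdot x-\theta')$ with $\|u\|_2=1$ and $u$ $\tau$-regular. *)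

theory Defs
  imports Complex_Main
begin

text \<open>Vectors in R^n are represented as functions on the index set {1..n}.\<close>

definition nnz :: "nat \<Rightarrow> (nat \<Rightarrow> real) \<Rightarrow> nat" where
  "nnz n w = card {i \<in> {1..n}. w i \<noteq> 0}"

definition l2norm :: "nat \<Rightarrow> (nat \<Rightarrow> real) \<Rightarrow> real" where
  "l2norm n w = sqrt (\<Sum>i=1..n. (w i)^2)"

definition sum4 :: "nat \<Rightarrow> (nat \<Rightarrow> real) \<Rightarrow> real" where
  "sum4 n u = (\<Sum>i=1..n. (u i)^4)"

end

theory Submission
  imports Defs
begin

text \<open>Every nonzero integer weight contributes at least 1 to \<open>\<Sum> w\<^sub>i\<^sup>2\<close>, so a vector
  with more than \<open>s\<close> nonzero entries has \<open>\<Sum> w\<^sub>i\<^sup>2 \<ge> s + 1\<close>. Since \<open>w\<^sub>i\<^sup>4 \<le> t\<^sup>2 w\<^sub>i\<^sup>2\<close>,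
  the normalized fourth moment \<open>\<Sum> w\<^sub>i\<^sup>4 / (\<Sum> w\<^sub>i\<^sup>2)\<^sup>2\<close> is at most
  \<open>t\<^sup>2 / \<Sum> w\<^sub>i\<^sup>2 \<le> t\<^sup>2 / (s + 1)\<close>.\<close>

lemma nnz_le_sum_squares:
  assumes "\<And>i. i \<in> {1..n} \<Longrightarrow> w i \<noteq> 0 \<Longrightarrow> \<bar>w i\<bar> \<ge> 1"
  shows "real (nnz n w) \<le> (\<Sum>i=1..n. (w i)^2)"
proof -
  let ?A = "{i \<in> {1..n}. w i \<noteq> 0}"
  have "real (nnz n w) = (\<Sum>i\<in>?A. 1)" by (simp add: nnz_def)
  also have "\<dots> \<le> (\<Sum>i\<in>?A. (w i)^2)"
  proof (rule sum_mono)
    fix i assume "i \<in> ?A"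
    then have "1 \<le> \<bar>w i\<bar>" using assms by blast
    then show "1 \<le> (w i)^2" by (metis abs_le_square_iff abs_one one_power2)
  qed
  also have "\<dots> \<le> (\<Sum>i=1..n. (w i)^2)" by (rule sum_mono2) auto
  finally show ?thesis .
qed

lemma sum4_normalize:
  "sum4 n (\<lambda>i. w i / l2norm n w) = sum4 n w / (\<Sum>i=1..n. (w i)^2)^2"
proof -
  have "l2norm n w ^ 4 = (\<Sum>i=1..n. (w i)^2)^2"
  proof -
    have "sqrt (\<Sum>i=1..n. (w i)^2) ^ 4 = (sqrt (\<Sum>i=1..n. (w i)^2) ^ 2)^2"
      by (simp flip: power_mult)
    then show ?thesis unfolding l2norm_def by (simp add: sum_nonneg)
  qed
  then show ?thesis
    by (simp add: sum4_def power_divide sum_divide_distrib)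
qed

lemma sum4_le_bound_times_sum_squares:
  assumes "\<And>i. i \<in> {1..n} \<Longrightarrow> \<bar>w i\<bar> \<le> t"
  shows "sum4 n w \<le> t^2 * (\<Sum>i=1..n. (w i)^2)"
  unfolding sum4_def sum_distrib_left
proof (rule sum_mono)
  fix i assume "i \<in> {1..n}"
  then have "\<bar>w i\<bar>^2 \<le> t^2" using assms by (intro power_mono) auto
  then have "(w i)^2 \<le> t^2" by simp
  then have "(w i)^2 * (w i)^2 \<le> t^2 * (w i)^2" by (rule mult_right_mono) simp
  then show "(w i)^4 \<le> t^2 * (w i)^2" by (simp flip: power_add)
qed

theorem mainTheorem3:
  fixes t n s :: nat and w :: "nat \<Rightarrow> int"
  assumes "\<forall>i\<in>{1..n}. \<bar>w i\<bar> \<le> int t"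
  shows "nnz n (\<lambda>i. real_of_int (w i)) \<le> s \<or>
         sum4 n (\<lambda>i. real_of_int (w i) / l2norm n (\<lambda>j. real_of_int (w j)))
           \<le> (real t)^2 / (real s + 1)"
proof (cases "nnz n (\<lambda>i. real_of_int (w i)) \<le> s")
  case not_sparse: False
  define W where "W = (\<lambda>i. real_of_int (w i))"
  define S where "S = (\<Sum>i=1..n. (W i)^2)"
  have "real s + 1 \<le> real (nnz n W)" using not_sparse by (simp add: W_def)
  also have "\<dots> \<le> S"
    unfolding S_def by (rule nnz_le_sum_squares) (auto simp: W_def)
  finally have S_ge: "real s + 1 \<le> S" .
  have "sum4 n (\<lambda>i. W i / l2norm n W) = sum4 n W / S^2"
    by (simp add: S_def sum4_normalize)
  also have "\<dots> \<le> (real t)^2 * S / S^2"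
    unfolding S_def
  proof (intro divide_right_mono sum4_le_bound_times_sum_squares)
    fix i assume "i \<in> {1..n}"
    then show "\<bar>W i\<bar> \<le> real t"
      using assms unfolding W_def by (metis of_int_abs of_int_le_iff of_int_of_nat_eq)
  qed simp
  also have "\<dots> = (real t)^2 / S"
    using S_ge by (simp add: power2_eq_square)
  also have "\<dots> \<le> (real t)^2 / (real s + 1)"
    using S_ge by (intro divide_left_mono) auto
  finally show ?thesis unfolding W_def by simp
qed simp

end
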